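(* Let $G$ be a bipartite graph between a hidden set $U$ with $|U|=n$ and an observed set $V$, with edge weights $w(u,v)\in\{-1,+1\}$. For $v\in V$ let $B(v)\subseteq U$ be its set of neighbours and $B^+(v)=\{u\in B(v): w(u,v)=+1\}$. Assume $|B(v)|\le d$ for all $v\in V$. Let $k=\rho n$ be a positive integer, let $S$ be a uniformly random $k$-subset of $U$, $h$ its indicator vector, and $y_v=\operatorname{sgn}\big(\sum_{u\in B(v)}w(u,v)h_u\big)$ for $v\in V$. Let $u\neq v$ in $V$. (a) If $B^+(u)\cap B^+(v)\ne\emptyset$ and $2\rho d\le 0.1$, then $\Pr[y_u=y_v=1]\ge 0.9\rho$. (b) If $B^+(u)\cap B^+(v)=\emptyset$, then $\Pr[y_u=y_v=1]\le \rho^2|B^+(u)|\,|B^+(v)|\le(\rho d)^2$.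
   Context: $\operatorname{sgn}(x)=1$ if $x>0$ and $0$ otherwise. Two observed nodes $u,v$ are called related if they have a common hidden neighbour joined to both by $+1$ edges, i.e. $B^+(u)\cap B^+(v)\neq\emptyset$. *)

theory Defs
  imports "HOL-Probability.Probability"
begin

definition sgnp :: "int \<Rightarrow> int" where
  "sgnp x = (if x > 0 then 1 else 0)"

definition Bplus :: "('v \<Rightarrow> 'u set) \<Rightarrow> ('u \<Rightarrow> 'v \<Rightarrow> int) \<Rightarrow> 'v \<Rightarrow> 'u set" where
  "Bplus B w v = {u \<in> B v. w u v = 1}"

definition obs :: "('v \<Rightarrow> 'u set) \<Rightarrow> ('u \<Rightarrow> 'v \<Rightarrow> int) \<Rightarrow> 'u set \<Rightarrow> 'v \<Rightarrow> int" where
  "obs B w S v = sgnp (\<Sum>u\<in>B v. w u v * (if u \<in> S then 1 else 0))"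

definition ksubsets_pmf :: "'u set \<Rightarrow> nat \<Rightarrow> 'u set pmf" where
  "ksubsets_pmf U k = pmf_of_set {S. S \<subseteq> U \<and> card S = k}"

end

theory Submission
  imports Defs
begin

(* Let S be a uniformly random k-subset of the hidden set U, |U| = N, and rho = k / N.
   The proof is a pair of union bounds resting on two facts about such random subsets:
   a fixed element lies in S with probability exactly rho, and two fixed distinct elements
   both lie in S with probability k(k-1)/(N(N-1)) <= rho^2.  Both follow from the general
   formula Pr[A <= S] = (k choose |A|) / (N choose |A|), obtained by counting k-subsets.
   On the graph side, y_v = 1 forces S to meet B+(v), and conversely y_v = 1 holds as soon
   as S meets B+(v) but avoids the negative neighbours B(v) - B+(v).
   (a) If u0 lies in B+(a) and B+(b), then y_a = y_b = 1 whenever u0 is in S and S avoids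
       the at most 2d negative neighbours of a and b; this has probability >= rho - 2 d rho^2.
   (b) If B+(a) and B+(b) are disjoint, y_a = y_b = 1 requires S to contain a pair
       (i, j) in B+(a) x B+(b) of distinct elements; summing rho^2 over these pairs gives the
       bound rho^2 |B+(a)| |B+(b)|. *)

text \<open>Counting the k-subsets of U that contain a fixed set A: they correspond to the
  (k - |A|)-subsets of U - A.\<close>
lemma card_ksubsets_superset:
  assumes fin: "finite U" and AU: "A \<subseteq> U" and Ak: "card A \<le> k"
  shows "card {S. S \<subseteq> U \<and> card S = k \<and> A \<subseteq> S} = (card U - card A) choose (k - card A)"
proof -
  have finA: "finite A" using fin AU finite_subset by blast
  have "bij_betw (\<lambda>T. A \<union> T) {T. T \<subseteq> U - A \<and> card T = k - card A}
          {S. S \<subseteq> U \<and> card S = k \<and> A \<subseteq> S}"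
  proof (rule bij_betw_byWitness[where f'="\<lambda>S. S - A"])
    show "\<forall>T\<in>{T. T \<subseteq> U - A \<and> card T = k - card A}. A \<union> T - A = T" by auto
    show "\<forall>S\<in>{S. S \<subseteq> U \<and> card S = k \<and> A \<subseteq> S}. A \<union> (S - A) = S" by auto
    show "(\<lambda>T. A \<union> T) ` {T. T \<subseteq> U - A \<and> card T = k - card A}
            \<subseteq> {S. S \<subseteq> U \<and> card S = k \<and> A \<subseteq> S}"
    proof clarify
      fix T assume T: "T \<subseteq> U - A" "card T = k - card A"
      have "finite T" using T fin finite_subset by blast
      then have "card (A \<union> T) = card A + card T" using T finA by (subst card_Un_disjoint) auto
      then show "A \<union> T \<subseteq> U \<and> card (A \<union> T) = k \<and> A \<subseteq> A \<union> T" using T AU Ak by auto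
    qed
    show "(\<lambda>S. S - A) ` {S. S \<subseteq> U \<and> card S = k \<and> A \<subseteq> S}
            \<subseteq> {T. T \<subseteq> U - A \<and> card T = k - card A}"
    proof clarify
      fix S assume S: "S \<subseteq> U" "k = card S" "A \<subseteq> S"
      have "finite S" using S fin finite_subset by blast
      then show "S - A \<subseteq> U - A \<and> card (S - A) = card S - card A"
        using S finA by (auto simp: card_Diff_subset)
    qed
  qed
  then have "card {S. S \<subseteq> U \<and> card S = k \<and> A \<subseteq> S}
               = card {T. T \<subseteq> U - A \<and> card T = k - card A}"
    by (simp add: bij_betw_same_card)
  also have "\<dots> = card (U - A) choose (k - card A)" using fin by (simp add: n_subsets)
  also have "card (U - A) = card U - card A" using AU finA by (simp add: card_Diff_subset)
  finally show ?thesis .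
qed

lemma prob_ksubsets:
  assumes fin: "finite U" and kn: "k \<le> card U"
  shows "measure_pmf.prob (ksubsets_pmf U k) E
           = card {S. S \<subseteq> U \<and> card S = k \<and> S \<in> E} / (card U choose k)"
proof -
  let ?K = "{S. S \<subseteq> U \<and> card S = k}"
  obtain S0 where "S0 \<subseteq> U" "card S0 = k" using obtain_subset_with_card_n[OF kn] .
  then have "?K \<noteq> {}" by blast
  moreover have "finite ?K" using fin by simp
  ultimately have "measure_pmf.prob (ksubsets_pmf U k) E = card (?K \<inter> E) / card ?K"
    unfolding ksubsets_pmf_def by (simp add: measure_pmf_of_set)
  moreover have "?K \<inter> E = {S. S \<subseteq> U \<and> card S = k \<and> S \<in> E}" by auto
  ultimately show ?thesis using fin by (simp add: n_subsets)
qed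

text \<open>A random k-subset of an N-set contains a fixed m-subset A with probability
  (k choose m) / (N choose m); this is the identity
  (N choose k)(k choose m) = (N choose m)(N - m choose k - m) in probabilistic form.\<close>
lemma prob_ksubsets_superset:
  assumes fin: "finite U" and AU: "A \<subseteq> U" and kn: "k \<le> card U"
  shows "measure_pmf.prob (ksubsets_pmf U k) {S. A \<subseteq> S}
           = real (k choose card A) / real (card U choose card A)"
proof (cases "card A \<le> k")
  case True
  have AN: "card A \<le> card U" using True kn by simp
  have "(card U choose k) * (k choose card A)
          = (card U choose card A) * ((card U - card A) choose (k - card A))"
    using choose_mult[OF True kn] .
  then have identity: "real (card U choose k) * real (k choose card A)
          = real (card U choose card A) * real ((card U - card A) choose (k - card A))"
    by (metis of_nat_mult)
  have pos: "0 < real (card U choose k)" "0 < real (card U choose card A)"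
    using kn AN by simp_all
  have "measure_pmf.prob (ksubsets_pmf U k) {S. A \<subseteq> S}
          = real ((card U - card A) choose (k - card A)) / real (card U choose k)"
    using prob_ksubsets[OF fin kn, of "{S. A \<subseteq> S}"] card_ksubsets_superset[OF fin AU True]
    by simp
  also have "\<dots> = real (k choose card A) / real (card U choose card A)"
    using identity pos by (simp add: field_simps)
  finally show ?thesis .
next
  case False
  have "card A \<le> card S" if "S \<subseteq> U" "A \<subseteq> S" for S
    using that fin by (meson card_mono finite_subset)
  then have "{S. S \<subseteq> U \<and> card S = k \<and> S \<in> {S. A \<subseteq> S}} = {}"
    using False by auto
  then have "measure_pmf.prob (ksubsets_pmf U k) {S. A \<subseteq> S} = 0"
    by (simp only: prob_ksubsets[OF fin kn] card.empty of_nat_0 div_0)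
  then show ?thesis using False by simp
qed

lemma prob_ksubsets_member:
  assumes fin: "finite U" and kn: "k \<le> card U" and i: "i \<in> U"
  shows "measure_pmf.prob (ksubsets_pmf U k) {S. i \<in> S} = real k / real (card U)"
proof -
  have "{S. {i} \<subseteq> S} = {S. i \<in> S}" by auto
  then show ?thesis using prob_ksubsets_superset[OF fin _ kn, of "{i}"] i by simp
qed

lemma real_choose_two: "real (n choose 2) = real n * (real n - 1) / 2"
proof (cases n)
  case 0
  then show ?thesis by simp
next
  case (Suc m)
  have "2 * (Suc m choose Suc 1) = Suc m * m"
    using Suc_times_binomial[of 1 m] by simp
  then have "2 * real (n choose 2) = real (Suc m) * real m"
    using Suc by (metis numeral_2_eq_2 One_nat_def of_nat_mult of_nat_numeral)
  then show ?thesis using Suc by simp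
qed

text \<open>Sampling without replacement makes two hits slightly less likely than sampling
  with replacement: k(k-1) / (N(N-1)) <= (k/N)^2 for 0 <= k <= N and N >= 1.\<close>
lemma falling_ratio_le_square:
  fixes k N :: real
  assumes "0 \<le> k" "k \<le> N" "1 \<le> N"
  shows "k * (k - 1) / (N * (N - 1)) \<le> (k / N)^2"
proof (cases "N = 1")
  case True
  then show ?thesis by simp
next
  case False
  have "k * (k * N - N) \<le> k * (k * N - k)"
    using assms by (intro mult_left_mono) auto
  then have "k * ((k - 1) * N) \<le> k * k * (N - 1)"
    by (simp add: algebra_simps)
  then show ?thesis using False assms by (simp add: divide_simps power2_eq_square)
qed

lemma prob_ksubsets_pair:
  assumes fin: "finite U" and kn: "k \<le> card U"
    and i: "i \<in> U" and j: "j \<in> U" and ij: "i \<noteq> j"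
  shows "measure_pmf.prob (ksubsets_pmf U k) {S. i \<in> S \<and> j \<in> S} \<le> (real k / real (card U))^2"
proof -
  have nonempty: "card U \<ge> 1" using card_gt_0_iff[of U] fin i by auto
  have "measure_pmf.prob (ksubsets_pmf U k) {S. i \<in> S \<and> j \<in> S}
          = real (k choose 2) / real (card U choose 2)"
  proof -
    have "{S. {i, j} \<subseteq> S} = {S. i \<in> S \<and> j \<in> S}" by auto
    moreover have "card {i, j} = 2" using ij by simp
    ultimately show ?thesis using prob_ksubsets_superset[OF fin _ kn, of "{i, j}"] i j by simp
  qed
  also have "\<dots> = real k * (real k - 1) / (real (card U) * (real (card U) - 1))"
    by (simp add: real_choose_two)
  also have "\<dots> \<le> (real k / real (card U))^2"
    using kn nonempty by (intro falling_ratio_le_square) auto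
  finally show ?thesis .
qed

text \<open>A positive observation y_v = 1 forces S to meet the positive neighbourhood B+(v):
  otherwise every term of the weighted sum is 0 or -1.\<close>
lemma obs_positive_meets_Bplus:
  assumes wt: "\<And>u. u \<in> B v \<Longrightarrow> w u v \<in> {-1, 1}" and pos: "obs B w S v = 1"
  shows "\<exists>i \<in> Bplus B w v. i \<in> S"
proof (rule ccontr)
  assume miss: "\<not> ?thesis"
  have "(\<Sum>u\<in>B v. w u v * (if u \<in> S then 1 else 0)) \<le> 0"
  proof (rule sum_nonpos)
    fix u assume u: "u \<in> B v"
    show "w u v * (if u \<in> S then 1 else 0) \<le> 0"
    proof (cases "u \<in> S")
      case True
      then have "w u v = -1" using miss wt[OF u] u by (auto simp: Bplus_def)
      then show ?thesis using True by simp
    qed simp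
  qed
  then show False using pos unfolding obs_def sgnp_def by simp
qed

lemma obs_positive_if_clean_hit:
  assumes fin: "finite (B v)" and wt: "\<And>u. u \<in> B v \<Longrightarrow> w u v \<in> {-1, 1}"
    and u0: "u0 \<in> Bplus B w v" and u0S: "u0 \<in> S"
    and clean: "(B v - Bplus B w v) \<inter> S = {}"
  shows "obs B w S v = 1"
proof -
  let ?f = "\<lambda>u. w u v * (if u \<in> S then 1 else 0)"
  have nonneg: "0 \<le> ?f u" if u: "u \<in> B v" for u
  proof (cases "u \<in> S")
    case True
    then have "u \<in> Bplus B w v" using clean u by blast
    then show ?thesis using True by (simp add: Bplus_def)
  qed simp
  have u0B: "u0 \<in> B v" and w1: "w u0 v = 1" using u0 by (auto simp: Bplus_def)
  have "?f u0 \<le> (\<Sum>u\<in>B v. ?f u)" using fin u0B nonneg by (intro member_le_sum) auto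
  then have "0 < (\<Sum>u\<in>B v. ?f u)" using w1 u0S by simp
  then show ?thesis unfolding obs_def sgnp_def by simp
qed

text \<open>A random k-subset contains a fixed element u0 while avoiding a fixed set N not
  containing u0 with probability at least rho - |N| rho^2, rho = k / N: the event
  u0 \<in> S has probability rho, and each bad pair {u0, x} with x \<in> N at most rho^2.\<close>
lemma prob_hit_and_avoid:
  assumes fin: "finite U" and kn: "k \<le> card U"
    and u0: "u0 \<in> U" and NU: "N \<subseteq> U" and u0N: "u0 \<notin> N"
  shows "real k / real (card U) - real (card N) * (real k / real (card U))^2
           \<le> measure_pmf.prob (ksubsets_pmf U k) {S. u0 \<in> S \<and> N \<inter> S = {}}"
proof -
  let ?P = "ksubsets_pmf U k" and ?\<rho> = "real k / real (card U)"
  let ?hit = "{S. u0 \<in> S}" and ?bad = "\<Union>x\<in>N. {S. u0 \<in> S \<and> x \<in> S}"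
  have finN: "finite N" using fin NU finite_subset by blast
  have "measure_pmf.prob ?P ?bad \<le> (\<Sum>x\<in>N. measure_pmf.prob ?P {S. u0 \<in> S \<and> x \<in> S})"
    using finN by (intro measure_pmf.finite_measure_subadditive_finite) auto
  also have "\<dots> \<le> real (card N) * ?\<rho>^2"
    using prob_ksubsets_pair[OF fin kn u0] NU u0N by (intro sum_bounded_above) auto
  finally have bad: "measure_pmf.prob ?P ?bad \<le> real (card N) * ?\<rho>^2" .
  have "?\<rho> = measure_pmf.prob ?P ?hit" using prob_ksubsets_member[OF fin kn u0] by simp
  also have "\<dots> \<le> measure_pmf.prob ?P ({S. u0 \<in> S \<and> N \<inter> S = {}} \<union> ?bad)"
    by (intro measure_pmf.finite_measure_mono) auto
  also have "\<dots> \<le> measure_pmf.prob ?P {S. u0 \<in> S \<and> N \<inter> S = {}} + measure_pmf.prob ?P ?bad"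
    by (rule measure_Un_le) auto
  finally show ?thesis using bad by linarith
qed

lemma prob_related_lower:
  assumes fin: "finite U" and kn: "k \<le> card U"
    and BaU: "B a \<subseteq> U" and BbU: "B b \<subseteq> U"
    and wa: "\<And>u. u \<in> B a \<Longrightarrow> w u a \<in> {-1, 1}" and wb: "\<And>u. u \<in> B b \<Longrightarrow> w u b \<in> {-1, 1}"
    and da: "card (B a) \<le> d" and db: "card (B b) \<le> d"
    and related: "Bplus B w a \<inter> Bplus B w b \<noteq> {}"
  shows "real k / real (card U) - 2 * real d * (real k / real (card U))^2
           \<le> measure_pmf.prob (ksubsets_pmf U k) {S. obs B w S a = 1 \<and> obs B w S b = 1}"
proof -
  let ?P = "ksubsets_pmf U k" and ?\<rho> = "real k / real (card U)"
  obtain u0 where u0a: "u0 \<in> Bplus B w a" and u0b: "u0 \<in> Bplus B w b" using related by blast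
  have finBa: "finite (B a)" and finBb: "finite (B b)" using BaU BbU fin finite_subset by auto
  define N where "N = (B a - Bplus B w a) \<union> (B b - Bplus B w b)"
  have u0U: "u0 \<in> U" using u0a BaU by (auto simp: Bplus_def)
  have NU: "N \<subseteq> U" and u0N: "u0 \<notin> N" unfolding N_def using BaU BbU u0a u0b by auto
  have cardN: "card N \<le> 2 * d"
  proof -
    have "card N \<le> card (B a - Bplus B w a) + card (B b - Bplus B w b)"
      unfolding N_def by (rule card_Un_le)
    also have "\<dots> \<le> card (B a) + card (B b)" using finBa finBb by (intro add_mono card_mono) auto
    finally show ?thesis using da db by simp
  qed
  have clean_hit: "{S. u0 \<in> S \<and> N \<inter> S = {}} \<subseteq> {S. obs B w S a = 1 \<and> obs B w S b = 1}"
    using obs_positive_if_clean_hit[OF finBa wa u0a] obs_positive_if_clean_hit[OF finBb wb u0b]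
    unfolding N_def by blast
  have "?\<rho> - 2 * real d * ?\<rho>^2 \<le> ?\<rho> - real (card N) * ?\<rho>^2"
    using cardN by (intro diff_left_mono mult_right_mono) auto
  also have "\<dots> \<le> measure_pmf.prob ?P {S. u0 \<in> S \<and> N \<inter> S = {}}"
    by (rule prob_hit_and_avoid[OF fin kn u0U NU u0N])
  also have "\<dots> \<le> measure_pmf.prob ?P {S. obs B w S a = 1 \<and> obs B w S b = 1}"
    using clean_hit by (rule measure_pmf.finite_measure_mono) auto
  finally show ?thesis .
qed

text \<open>Part (b): for unrelated observed nodes a, b,
  Pr[y_a = y_b = 1] <= rho^2 |B+(a)| |B+(b)|, by a union bound over the pairs
  (i, j) \<in> B+(a) \<times> B+(b), which consist of distinct elements.\<close>
lemma prob_unrelated_upper: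
  assumes fin: "finite U" and kn: "k \<le> card U"
    and BaU: "B a \<subseteq> U" and BbU: "B b \<subseteq> U"
    and wa: "\<And>u. u \<in> B a \<Longrightarrow> w u a \<in> {-1, 1}" and wb: "\<And>u. u \<in> B b \<Longrightarrow> w u b \<in> {-1, 1}"
    and unrelated: "Bplus B w a \<inter> Bplus B w b = {}"
  shows "measure_pmf.prob (ksubsets_pmf U k) {S. obs B w S a = 1 \<and> obs B w S b = 1}
           \<le> (real k / real (card U))^2 * real (card (Bplus B w a)) * real (card (Bplus B w b))"
proof -
  let ?P = "ksubsets_pmf U k" and ?\<rho> = "real k / real (card U)"
  let ?I = "Bplus B w a \<times> Bplus B w b"
  let ?both = "\<lambda>p. {S. fst p \<in> S \<and> snd p \<in> S}"
  have BpaU: "Bplus B w a \<subseteq> U" and BpbU: "Bplus B w b \<subseteq> U"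
    using BaU BbU by (auto simp: Bplus_def)
  have finI: "finite ?I" using BpaU BpbU fin finite_subset by blast
  have "{S. obs B w S a = 1 \<and> obs B w S b = 1} \<subseteq> (\<Union>p\<in>?I. ?both p)"
  proof
    fix S assume "S \<in> {S. obs B w S a = 1 \<and> obs B w S b = 1}"
    then obtain i j where "i \<in> Bplus B w a" "i \<in> S" "j \<in> Bplus B w b" "j \<in> S"
      using obs_positive_meets_Bplus[of B a w, OF wa] obs_positive_meets_Bplus[of B b w, OF wb]
      by blast
    then show "S \<in> (\<Union>p\<in>?I. ?both p)" by force
  qed
  then have "measure_pmf.prob ?P {S. obs B w S a = 1 \<and> obs B w S b = 1}
               \<le> measure_pmf.prob ?P (\<Union>p\<in>?I. ?both p)"
    by (rule measure_pmf.finite_measure_mono) auto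
  also have "\<dots> \<le> (\<Sum>p\<in>?I. measure_pmf.prob ?P (?both p))"
    using finI by (intro measure_pmf.finite_measure_subadditive_finite) auto
  also have "\<dots> \<le> real (card ?I) * ?\<rho>^2"
  proof (rule sum_bounded_above)
    fix p assume "p \<in> ?I"
    then have "fst p \<in> U" "snd p \<in> U" "fst p \<noteq> snd p" using BpaU BpbU unrelated by auto
    then show "measure_pmf.prob ?P (?both p) \<le> ?\<rho>^2" by (rule prob_ksubsets_pair[OF fin kn])
  qed
  also have "\<dots> = ?\<rho>^2 * real (card (Bplus B w a)) * real (card (Bplus B w b))"
    by (simp add: card_cartesian_product)
  finally show ?thesis .
qed

theorem mainTheorem3:
  fixes U :: "'u set" and V :: "'v set" and B :: "'v \<Rightarrow> 'u set"
    and w :: "'u \<Rightarrow> 'v \<Rightarrow> int" and n k d :: nat and \<rho> :: real and a b :: 'v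
  assumes finU: "finite U" and cardU: "card U = n"
    and bip: "\<And>v. v \<in> V \<Longrightarrow> B v \<subseteq> U"
    and wts: "\<And>v u. v \<in> V \<Longrightarrow> u \<in> B v \<Longrightarrow> w u v \<in> {-1, 1}"
    and deg: "\<And>v. v \<in> V \<Longrightarrow> card (B v) \<le> d"
    and kpos: "0 < k" and kle: "k \<le> n" and rho: "real k = \<rho> * real n"
    and aV: "a \<in> V" and bV: "b \<in> V" and ab: "a \<noteq> b"
  shows "(Bplus B w a \<inter> Bplus B w b \<noteq> {} \<and> 2 * \<rho> * real d \<le> 0.1 \<longrightarrow>
            measure_pmf.prob (ksubsets_pmf U k)
              {S. obs B w S a = 1 \<and> obs B w S b = 1} \<ge> 0.9 * \<rho>)
       \<and> (Bplus B w a \<inter> Bplus B w b = {} \<longrightarrow>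
            measure_pmf.prob (ksubsets_pmf U k)
              {S. obs B w S a = 1 \<and> obs B w S b = 1}
              \<le> \<rho>^2 * real (card (Bplus B w a)) * real (card (Bplus B w b))
            \<and> \<rho>^2 * real (card (Bplus B w a)) * real (card (Bplus B w b)) \<le> (\<rho> * real d)^2)"
proof -
  let ?E = "{S. obs B w S a = 1 \<and> obs B w S b = 1}"
  have "0 < real n" using kpos kle by simp
  then have rho_eq: "\<rho> = real k / real (card U)" using rho cardU by (simp add: eq_divide_eq)
  then have rho_nonneg: "0 \<le> \<rho>" by simp
  have kn: "k \<le> card U" using kle cardU by simp
  note graph = bip[OF aV] bip[OF bV] wts[OF aV] wts[OF bV]
  have card_Bplus: "card (Bplus B w v) \<le> d" if v: "v \<in> V" for v
  proof -
    have "finite (B v)" using finite_subset[OF bip[OF v] finU] .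
    then have "card (Bplus B w v) \<le> card (B v)" by (rule card_mono) (auto simp: Bplus_def)
    then show ?thesis using deg[OF v] by simp
  qed
  show ?thesis
  proof (intro conjI impI)
    assume H: "Bplus B w a \<inter> Bplus B w b \<noteq> {} \<and> 2 * \<rho> * real d \<le> 0.1"
    have "2 * real d * \<rho>^2 = \<rho> * (2 * \<rho> * real d)" by (simp add: power2_eq_square)
    also have "\<dots> \<le> \<rho> * 0.1" using H rho_nonneg by (intro mult_left_mono) auto
    finally have "0.9 * \<rho> \<le> \<rho> - 2 * real d * \<rho>^2" by simp
    also have "\<dots> \<le> measure_pmf.prob (ksubsets_pmf U k) ?E"
      unfolding rho_eq by (rule prob_related_lower[OF finU kn graph deg[OF aV] deg[OF bV] conjunct1[OF H]])
    finally show "measure_pmf.prob (ksubsets_pmf U k) ?E \<ge> 0.9 * \<rho>" .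
  next
    assume unrelated: "Bplus B w a \<inter> Bplus B w b = {}"
    show "measure_pmf.prob (ksubsets_pmf U k) ?E
                 \<le> \<rho>^2 * real (card (Bplus B w a)) * real (card (Bplus B w b))"
      unfolding rho_eq by (rule prob_unrelated_upper[OF finU kn graph unrelated])
  next
    have "real (card (Bplus B w a)) * real (card (Bplus B w b)) \<le> real d * real d"
      using card_Bplus[OF aV] card_Bplus[OF bV] by (intro mult_mono) auto
    then have "\<rho>^2 * (real (card (Bplus B w a)) * real (card (Bplus B w b))) \<le> \<rho>^2 * (real d * real d)"
      by (rule mult_left_mono) simp
    then show "\<rho>^2 * real (card (Bplus B w a)) * real (card (Bplus B w b)) \<le> (\<rho> * real d)^2"
      by (simp add: power2_eq_square mult_ac)
  qed
qed

end
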